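(* Let $\mathcal V$ be a congruence modular variety with Day terms $m_0,\dots,m_k$, $\mathbb A\in\mathcal V$, $n\ge 2$, and $R\le\mathbb A^{2^n}$ an $(n)$-dimensional tolerance of $\mathbb A$. Let $\gamma\in R$ and let $d\in\mathbb D_n$ be a sequence of length $i\in n$. Then (1) $\gamma^d\in R$, and (2) for every $f\in 2^{n\setminus\{i\}}$ such that $f(j)=0$ for some $j<i$, the $(i)$-cross-section line of $\gamma^d$ at $f$ is a constant pair (a pair $(a,a)$).
   Context: Cube notation. $n=\{0,\dots,n-1\}$, $2=\{0,1\}$; $2^n$ is the set of functions $n\to 2$. An $(n)$-cube over $A$ is $\gamma=(\gamma_f)_{f\in2^n}\in A^{2^n}$. For $i\in n$, $j\in 2$: $\mathrm{face}_i^j(\gamma)$ is $g\mapsto\gamma_{g\cup\{(i,j)\}}$; $\mathrm{glue}_{\{i\}}(\zeta,\eta)$ is the unique cube with $\mathrm{face}_i^0=\zeta$, $\mathrm{face}_i^1=\eta$; $\mathrm{refl}_i^j(\gamma)=\mathrm{glue}_{\{i\}}(\mathrm{face}_i^j\gamma,\mathrm{face}_i^j\gamma)$; $\mathrm{sym}_i(\gamma)=\mathrm{glue}_{\{i\}}(\mathrm{face}_i^1\gamma,\mathrm{face}_i^0\gamma)$. For $f\in 2^{n\setminus\{i\}}$ the $(i)$-cross-section line of $\gamma$ at $f$ is the pair $(\gamma_{f\cup\{(i,0)\}},\gamma_{f\cup\{(i,1)\}})$. A subuniverse $R$ of $\mathbb A^{2^n}$ is an $(n)$-dimensional tolerance if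 $\mathrm{refl}_i^j(\gamma),\mathrm{sym}_i(\gamma)\in R$ for all $\gamma\in R$, $i,j$. Day terms: $4$-ary terms $m_0,\dots,m_k$ with $m_0(x,y,z,w)\approx x$, $m_k(x,y,z,w)\approx w$, $m_e(x,y,y,x)\approx x$ for all $e$, $m_e(x,x,w,w)\approx m_{e+1}(x,x,w,w)$ for even $e<k$, $m_e(x,y,y,w)\approx m_{e+1}(x,y,y,w)$ for odd $e<k$; a variety is modular iff it has Day terms. Shift rotation: for $e\in\{0,\dots,k\}$ and $i\neq j\in n$, $\mathrm{rot}^e_{i,j}(\gamma)=m_e\big(\mathrm{refl}_j^1(\gamma),\gamma,\mathrm{refl}_i^0(\gamma),\mathrm{refl}_j^1(\mathrm{refl}_i^0(\gamma))\big)$ (coordinatewise). Tree. $\mathbb D_n$ is the set of finite sequences of elements of $\{0,\dots,k\}$ of length less than $n$ (including the empty sequence $\emptyset$), ordered by extension. For $\gamma\in A^{2^n}$ set $\gamma^\emptyset=\gamma$ and, for a nonempty $d=(d_0,\dots,d_i)\in\mathbb D_n$ with predecessor $c=(d_0,\dots,d_{i-1})$, $\gamma^d=\mathrm{rot}^{d_i}_{i,i+1}(\gamma^c)$. *)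

theory Defs
  imports Main "HOL-Library.FuncSet"
begin

datatype 'f trm = Var nat | App 'f "'f trm list"

fun wf_trm :: "('f \<Rightarrow> nat) \<Rightarrow> nat \<Rightarrow> 'f trm \<Rightarrow> bool" where
  "wf_trm ar nv (Var v) = (v < nv)"
| "wf_trm ar nv (App f ts) = (length ts = ar f \<and> (\<forall>t\<in>set ts. wf_trm ar nv t))"

fun tev :: "('f \<Rightarrow> 'a list \<Rightarrow> 'a) \<Rightarrow> (nat \<Rightarrow> 'a) \<Rightarrow> 'f trm \<Rightarrow> 'a" where
  "tev I env (Var v) = env v"
| "tev I env (App f ts) = I f (map (tev I env) ts)"

definition is_algebra :: "'a set \<Rightarrow> ('f \<Rightarrow> nat) \<Rightarrow> ('f \<Rightarrow> 'a list \<Rightarrow> 'a) \<Rightarrow> bool" where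
  "is_algebra A ar I \<longleftrightarrow> A \<noteq> {} \<and>
     (\<forall>f xs. length xs = ar f \<longrightarrow> set xs \<subseteq> A \<longrightarrow> I f xs \<in> A)"

definition tev4 :: "('f \<Rightarrow> 'a list \<Rightarrow> 'a) \<Rightarrow> 'f trm \<Rightarrow> 'a \<Rightarrow> 'a \<Rightarrow> 'a \<Rightarrow> 'a \<Rightarrow> 'a" where
  "tev4 I t x y z w = tev I (\<lambda>v. [x, y, z, w] ! v) t"

definition day_terms :: "'a set \<Rightarrow> ('f \<Rightarrow> nat) \<Rightarrow> ('f \<Rightarrow> 'a list \<Rightarrow> 'a) \<Rightarrow> nat \<Rightarrow> 'f trm list \<Rightarrow> bool" where
  "day_terms A ar I k ms \<longleftrightarrow> length ms = Suc k \<and> (\<forall>t\<in>set ms. wf_trm ar 4 t) \<and>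
    (\<forall>x\<in>A. \<forall>y\<in>A. \<forall>z\<in>A. \<forall>w\<in>A.
       tev4 I (ms ! 0) x y z w = x \<and>
       tev4 I (ms ! k) x y z w = w \<and>
       (\<forall>e\<le>k. tev4 I (ms ! e) x y y x = x) \<and>
       (\<forall>e<k. even e \<longrightarrow> tev4 I (ms ! e) x x w w = tev4 I (ms ! Suc e) x x w w) \<and>
       (\<forall>e<k. odd e \<longrightarrow> tev4 I (ms ! e) x y y w = tev4 I (ms ! Suc e) x y y w))"

text \<open>2^S for S \<subseteq> nat: the functions S -> {0,1} (extensional). 2^n = two_pow {..<n}.\<close>
definition two_pow :: "nat set \<Rightarrow> (nat \<Rightarrow> nat) set" where
  "two_pow S = S \<rightarrow>\<^sub>E {0, 1}"

definition cubes :: "'a set \<Rightarrow> nat \<Rightarrow> ((nat \<Rightarrow> nat) \<Rightarrow> 'a) set" where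
  "cubes A n = two_pow {..<n} \<rightarrow>\<^sub>E A"

definition face :: "nat \<Rightarrow> nat \<Rightarrow> nat \<Rightarrow> ((nat \<Rightarrow> nat) \<Rightarrow> 'a) \<Rightarrow> ((nat \<Rightarrow> nat) \<Rightarrow> 'a)" where
  "face n i j \<gamma> = (\<lambda>g\<in>two_pow ({..<n} - {i}). \<gamma> (g(i := j)))"

definition glue :: "nat \<Rightarrow> nat \<Rightarrow> ((nat \<Rightarrow> nat) \<Rightarrow> 'a) \<Rightarrow> ((nat \<Rightarrow> nat) \<Rightarrow> 'a) \<Rightarrow> ((nat \<Rightarrow> nat) \<Rightarrow> 'a)" where
  "glue n i \<zeta> \<eta> = (\<lambda>f\<in>two_pow {..<n}.
      if f i = 0 then \<zeta> (f(i := undefined)) else \<eta> (f(i := undefined)))"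

definition refl_c :: "nat \<Rightarrow> nat \<Rightarrow> nat \<Rightarrow> ((nat \<Rightarrow> nat) \<Rightarrow> 'a) \<Rightarrow> ((nat \<Rightarrow> nat) \<Rightarrow> 'a)" where
  "refl_c n i j \<gamma> = glue n i (face n i j \<gamma>) (face n i j \<gamma>)"

definition sym_c :: "nat \<Rightarrow> nat \<Rightarrow> ((nat \<Rightarrow> nat) \<Rightarrow> 'a) \<Rightarrow> ((nat \<Rightarrow> nat) \<Rightarrow> 'a)" where
  "sym_c n i \<gamma> = glue n i (face n i 1 \<gamma>) (face n i 0 \<gamma>)"

definition subuniverse_pow :: "'a set \<Rightarrow> ('f \<Rightarrow> nat) \<Rightarrow> ('f \<Rightarrow> 'a list \<Rightarrow> 'a) \<Rightarrow> nat
    \<Rightarrow> ((nat \<Rightarrow> nat) \<Rightarrow> 'a) set \<Rightarrow> bool" where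
  "subuniverse_pow A ar I n R \<longleftrightarrow> R \<subseteq> cubes A n \<and>
     (\<forall>f gs. length gs = ar f \<longrightarrow> set gs \<subseteq> R \<longrightarrow>
        (\<lambda>x\<in>two_pow {..<n}. I f (map (\<lambda>g. g x) gs)) \<in> R)"

definition tolerance :: "'a set \<Rightarrow> ('f \<Rightarrow> nat) \<Rightarrow> ('f \<Rightarrow> 'a list \<Rightarrow> 'a) \<Rightarrow> nat
    \<Rightarrow> ((nat \<Rightarrow> nat) \<Rightarrow> 'a) set \<Rightarrow> bool" where
  "tolerance A ar I n R \<longleftrightarrow> subuniverse_pow A ar I n R \<and>
     (\<forall>\<gamma>\<in>R. \<forall>i<n. (\<forall>j\<in>{0,1}. refl_c n i j \<gamma> \<in> R) \<and> sym_c n i \<gamma> \<in> R)"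

definition rot :: "('f \<Rightarrow> 'a list \<Rightarrow> 'a) \<Rightarrow> 'f trm list \<Rightarrow> nat \<Rightarrow> nat \<Rightarrow> nat \<Rightarrow> nat
    \<Rightarrow> ((nat \<Rightarrow> nat) \<Rightarrow> 'a) \<Rightarrow> ((nat \<Rightarrow> nat) \<Rightarrow> 'a)" where
  "rot I ms n e i j \<gamma> = (\<lambda>f\<in>two_pow {..<n}.
      tev4 I (ms ! e) (refl_c n j 1 \<gamma> f) (\<gamma> f) (refl_c n i 0 \<gamma> f)
        (refl_c n j 1 (refl_c n i 0 \<gamma>) f))"

text \<open>gamma^d for d = (d_0,...,d_(l-1)): gamma^[] = gamma and
gamma^(c @ [x]) = rot^x_{|c|,|c|+1}(gamma^c).\<close>
primrec tree_cube_rev :: "('f \<Rightarrow> 'a list \<Rightarrow> 'a) \<Rightarrow> 'f trm list \<Rightarrow> nat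
    \<Rightarrow> ((nat \<Rightarrow> nat) \<Rightarrow> 'a) \<Rightarrow> nat list \<Rightarrow> ((nat \<Rightarrow> nat) \<Rightarrow> 'a)" where
  "tree_cube_rev I ms n \<gamma> [] = \<gamma>"
| "tree_cube_rev I ms n \<gamma> (x # c) = rot I ms n x (length c) (Suc (length c)) (tree_cube_rev I ms n \<gamma> c)"

definition tree_cube :: "('f \<Rightarrow> 'a list \<Rightarrow> 'a) \<Rightarrow> 'f trm list \<Rightarrow> nat
    \<Rightarrow> ((nat \<Rightarrow> nat) \<Rightarrow> 'a) \<Rightarrow> nat list \<Rightarrow> ((nat \<Rightarrow> nat) \<Rightarrow> 'a)" where
  "tree_cube I ms n \<gamma> d = tree_cube_rev I ms n \<gamma> (rev d)"

lemma tree_cube_Nil: "tree_cube I ms n \<gamma> [] = \<gamma>"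
  by (simp add: tree_cube_def)

lemma tree_cube_snoc:
  "tree_cube I ms n \<gamma> (c @ [x]) = rot I ms n x (length c) (Suc (length c)) (tree_cube I ms n \<gamma> c)"
  by (simp add: tree_cube_def)

definition tree_D :: "nat \<Rightarrow> nat \<Rightarrow> nat list set" where
  "tree_D k n = {d. length d < n \<and> (\<forall>x\<in>set d. x \<le> k)}"

end

theory Submission
  imports Defs
begin

text \<open>The cube \<open>\<gamma>\<^sup>d\<close> arises from \<open>\<gamma>\<close> by applying term operations to reflections of
earlier cubes, so it stays in the tolerance \<open>R\<close>. For the lines, write \<open>g\<^sub>a = f(i := a)\<close>
with \<open>i = p + 1\<close> and \<open>f j = 0\<close> for some \<open>j \<le> p\<close>. By induction, the earlier cube \<open>\<delta>\<close> does
not change when coordinate \<open>p\<close> of \<open>g\<^sub>a\<close> is reset to \<open>0\<close>, so the shift rotation evaluates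
at \<open>g\<^sub>0\<close> to \<open>m(\<delta> g\<^sub>1, \<delta> g\<^sub>0, \<delta> g\<^sub>0, \<delta> g\<^sub>1)\<close> and at \<open>g\<^sub>1\<close> to \<open>m(\<delta> g\<^sub>1, \<delta> g\<^sub>1, \<delta> g\<^sub>1, \<delta> g\<^sub>1)\<close>;
the Day identity \<open>m(x, y, y, x) = x\<close> makes both equal to \<open>\<delta> g\<^sub>1\<close>.\<close>

definition lines_constant :: "nat \<Rightarrow> nat \<Rightarrow> ((nat \<Rightarrow> nat) \<Rightarrow> 'a) \<Rightarrow> bool" where
  "lines_constant n i \<gamma> \<longleftrightarrow>
     (\<forall>f\<in>two_pow ({..<n} - {i}). (\<exists>j<i. f j = 0) \<longrightarrow> \<gamma> (f(i := 0)) = \<gamma> (f(i := 1)))"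

lemma two_pow_fun_upd:
  "f \<in> two_pow S \<Longrightarrow> i \<in> S \<Longrightarrow> a \<in> {0, 1} \<Longrightarrow> f(i := a) \<in> two_pow S"
  unfolding two_pow_def by (auto simp: PiE_iff extensional_def)

lemma two_pow_extend:
  "f \<in> two_pow (S - {i}) \<Longrightarrow> i \<in> S \<Longrightarrow> a \<in> {0, 1} \<Longrightarrow> f(i := a) \<in> two_pow S"
  unfolding two_pow_def by (auto simp: PiE_iff extensional_def)

lemma two_pow_restrict: "f \<in> two_pow S \<Longrightarrow> f(i := undefined) \<in> two_pow (S - {i})"
  unfolding two_pow_def by (auto simp: PiE_iff extensional_def)

lemma two_pow_range: "f \<in> two_pow S \<Longrightarrow> p \<in> S \<Longrightarrow> f p \<in> {0, 1}"
  unfolding two_pow_def by (auto simp: PiE_iff)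

lemma refl_c_eval:
  assumes "f \<in> two_pow {..<n}" "i < n"
  shows "refl_c n i j \<gamma> f = \<gamma> (f(i := j))"
  using assms two_pow_restrict[OF assms(1), of i]
  unfolding refl_c_def glue_def face_def by auto

lemma rot_eval:
  assumes "f \<in> two_pow {..<n}" "i < n" "j < n"
  shows "rot I ms n e i j \<gamma> f =
    tev4 I (ms ! e) (\<gamma> (f(j := 1))) (\<gamma> f) (\<gamma> (f(i := 0))) (\<gamma> (f(j := 1, i := 0)))"
  using assms two_pow_fun_upd[OF assms(1), of j 1]
  unfolding rot_def by (simp add: refl_c_eval)

lemma subuniverse_pow_term_closed:
  assumes sub: "subuniverse_pow A ar I n R" and gs: "set gs \<subseteq> R"
  shows "wf_trm ar (length gs) t \<Longrightarrow>
    (\<lambda>x\<in>two_pow {..<n}. tev I (\<lambda>v. map (\<lambda>g. g x) gs ! v) t) \<in> R"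
proof (induction t)
  case (Var v)
  then have "gs ! v \<in> R" using gs by auto
  moreover from this have "(\<lambda>x\<in>two_pow {..<n}. (gs ! v) x) = gs ! v"
    using sub unfolding subuniverse_pow_def cubes_def by (meson PiE_restrict subsetD)
  ultimately show ?case using Var by simp
next
  case (App f ts)
  define hs where "hs = map (\<lambda>t. \<lambda>x\<in>two_pow {..<n}. tev I (\<lambda>v. map (\<lambda>g. g x) gs ! v) t) ts"
  have "length hs = ar f" "set hs \<subseteq> R" using App by (auto simp: hs_def restrict_def)
  then have "(\<lambda>x\<in>two_pow {..<n}. I f (map (\<lambda>h. h x) hs)) \<in> R"
    using sub unfolding subuniverse_pow_def by blast
  moreover have "(\<lambda>x\<in>two_pow {..<n}. I f (map (\<lambda>h. h x) hs)) =
      (\<lambda>x\<in>two_pow {..<n}. tev I (\<lambda>v. map (\<lambda>g. g x) gs ! v) (App f ts))"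
    by (rule restrict_ext) (simp add: hs_def comp_def)
  ultimately show ?case by (simp add: restrict_def)
qed

lemma rot_in_tolerance:
  assumes tol: "tolerance A ar I n R" and day: "day_terms A ar I k ms"
    and "\<delta> \<in> R" "e \<le> k" "i < n" "j < n"
  shows "rot I ms n e i j \<delta> \<in> R"
proof -
  have sub: "subuniverse_pow A ar I n R" using tol by (simp add: tolerance_def)
  have refl: "\<And>g i a. g \<in> R \<Longrightarrow> i < n \<Longrightarrow> a \<in> {0, 1} \<Longrightarrow> refl_c n i a g \<in> R"
    using tol unfolding tolerance_def by blast
  let ?gs = "[refl_c n j 1 \<delta>, \<delta>, refl_c n i 0 \<delta>, refl_c n j 1 (refl_c n i 0 \<delta>)]"
  have "set ?gs \<subseteq> R" using refl assms by simp
  moreover have "wf_trm ar (length ?gs) (ms ! e)"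
    using day \<open>e \<le> k\<close> by (auto simp: day_terms_def eval_nat_numeral)
  ultimately have "(\<lambda>x\<in>two_pow {..<n}. tev I (\<lambda>v. map (\<lambda>g. g x) ?gs ! v) (ms ! e)) \<in> R"
    by (rule subuniverse_pow_term_closed[OF sub])
  then show ?thesis by (simp add: rot_def tev4_def)
qed

lemma lines_constant_reset:
  assumes lc: "lines_constant n p \<delta>" and g: "g \<in> two_pow {..<n}"
    and "p < n" "j \<le> p" "g j = 0"
  shows "\<delta> (g(p := 0)) = \<delta> g"
proof (cases "j = p")
  case True
  with \<open>g j = 0\<close> show ?thesis by (simp add: fun_upd_idem)
next
  case False
  define h where "h = g(p := undefined)"
  have h: "h \<in> two_pow ({..<n} - {p})" using two_pow_restrict[OF g] by (simp add: h_def)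
  have "j < p" "h j = 0" using False assms by (auto simp: h_def)
  then have "\<delta> (h(p := 0)) = \<delta> (h(p := 1))" using lc h unfolding lines_constant_def by blast
  moreover have "g = h(p := g p)" "g(p := 0) = h(p := 0)" by (auto simp: h_def)
  moreover have "g p \<in> {0, 1}" using two_pow_range[OF g] \<open>p < n\<close> by simp
  ultimately show ?thesis by auto
qed

lemma rot_lines_constant:
  assumes lc: "lines_constant n p \<delta>" and "Suc p < n"
    and \<delta>A: "\<And>g. g \<in> two_pow {..<n} \<Longrightarrow> \<delta> g \<in> A"
    and absorb: "\<And>x y. x \<in> A \<Longrightarrow> y \<in> A \<Longrightarrow> tev4 I (ms ! e) x y y x = x"
  shows "lines_constant n (Suc p) (rot I ms n e p (Suc p) \<delta>)"
  unfolding lines_constant_def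
proof (intro ballI impI)
  fix f assume f: "f \<in> two_pow ({..<n} - {Suc p})" and "\<exists>j<Suc p. f j = 0"
  then obtain j where "j \<le> p" "f j = 0" by (auto simp: less_Suc_eq_le)
  define g where "g a = f(Suc p := a)" for a
  have g0: "g 0 \<in> two_pow {..<n}" and g1: "g 1 \<in> two_pow {..<n}"
    using two_pow_extend[OF f] \<open>Suc p < n\<close> by (simp_all add: g_def)
  have "\<delta> ((g a)(p := 0)) = \<delta> (g a)" if "g a \<in> two_pow {..<n}" for a
    using lines_constant_reset[OF lc that] \<open>Suc p < n\<close> \<open>j \<le> p\<close> \<open>f j = 0\<close>
    by (simp add: g_def)
  then have reset0: "\<delta> ((g 0)(p := 0)) = \<delta> (g 0)" and reset1: "\<delta> ((g 1)(p := 0)) = \<delta> (g 1)"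
    using g0 g1 by blast+
  have upd: "(g a)(Suc p := 1) = g 1" for a by (simp add: g_def)
  have \<delta>g: "\<delta> (g 0) \<in> A" "\<delta> (g 1) \<in> A" using \<delta>A g0 g1 by blast+
  have "rot I ms n e p (Suc p) \<delta> (g 0) = tev4 I (ms ! e) (\<delta> (g 1)) (\<delta> (g 0)) (\<delta> (g 0)) (\<delta> (g 1))"
    using rot_eval[OF g0, of p "Suc p" I ms e \<delta>] \<open>Suc p < n\<close>
    by (simp only: upd reset0 reset1 Suc_lessD)
  also have "\<dots> = \<delta> (g 1)" using absorb \<delta>g by simp
  also have "\<dots> = tev4 I (ms ! e) (\<delta> (g 1)) (\<delta> (g 1)) (\<delta> (g 1)) (\<delta> (g 1))"
    using absorb \<delta>g by simp
  also have "\<dots> = rot I ms n e p (Suc p) \<delta> (g 1)"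
    using rot_eval[OF g1, of p "Suc p" I ms e \<delta>] \<open>Suc p < n\<close>
    by (simp only: upd reset0 reset1 Suc_lessD)
  finally show "rot I ms n e p (Suc p) \<delta> (f(Suc p := 0)) =
      rot I ms n e p (Suc p) \<delta> (f(Suc p := 1))"
    by (simp add: g_def)
qed

lemma tree_cube_rev_tolerance_lines_constant:
  assumes tol: "tolerance A ar I n R" and day: "day_terms A ar I k ms" and "\<gamma> \<in> R"
  shows "length c < n \<Longrightarrow> \<forall>x\<in>set c. x \<le> k \<Longrightarrow>
    tree_cube_rev I ms n \<gamma> c \<in> R \<and> lines_constant n (length c) (tree_cube_rev I ms n \<gamma> c)"
proof (induction c)
  case Nil
  then show ?case using \<open>\<gamma> \<in> R\<close> by (simp add: lines_constant_def)
next
  case (Cons e c)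
  let ?\<delta> = "tree_cube_rev I ms n \<gamma> c"
  have IH: "?\<delta> \<in> R" "lines_constant n (length c) ?\<delta>" using Cons by auto
  have "e \<le> k" using Cons.prems by simp
  have "?\<delta> \<in> cubes A n" using IH(1) tol by (auto simp: tolerance_def subuniverse_pow_def)
  then have \<delta>A: "\<And>g. g \<in> two_pow {..<n} \<Longrightarrow> ?\<delta> g \<in> A" by (auto simp: cubes_def)
  have absorb: "\<And>x y. x \<in> A \<Longrightarrow> y \<in> A \<Longrightarrow> tev4 I (ms ! e) x y y x = x"
    using day \<open>e \<le> k\<close> unfolding day_terms_def by blast
  have "lines_constant n (Suc (length c)) (rot I ms n e (length c) (Suc (length c)) ?\<delta>)"
    using rot_lines_constant[OF IH(2) _ \<delta>A absorb] Cons.prems by simp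
  then show ?case using rot_in_tolerance[OF tol day IH(1) \<open>e \<le> k\<close>] Cons.prems by simp
qed

theorem lemma2p4:
  fixes A :: "'a set" and ar :: "'f \<Rightarrow> nat" and I :: "'f \<Rightarrow> 'a list \<Rightarrow> 'a"
    and k n i :: nat and ms :: "'f trm list"
    and R :: "((nat \<Rightarrow> nat) \<Rightarrow> 'a) set" and \<gamma> :: "(nat \<Rightarrow> nat) \<Rightarrow> 'a" and d :: "nat list"
  assumes alg: "is_algebra A ar I"
    and day: "day_terms A ar I k ms"
    and n2: "n \<ge> 2"
    and tol: "tolerance A ar I n R"
    and gR: "\<gamma> \<in> R"
    and dD: "d \<in> tree_D k n"
    and len: "length d = i"
  shows "tree_cube I ms n \<gamma> d \<in> R \<and>
    (\<forall>f\<in>two_pow ({..<n} - {i}). (\<exists>j<i. f j = 0) \<longrightarrow>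
       tree_cube I ms n \<gamma> d (f(i := 0)) = tree_cube I ms n \<gamma> d (f(i := 1)))"
  using tree_cube_rev_tolerance_lines_constant[OF tol day gR, of "rev d"] dD len
  by (simp add: tree_cube_def tree_D_def lines_constant_def)

end
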